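(* Let $(X,Y,\eta,\mu,\psi,\epsilon,\delta,\phi)$ be a left Frobenius pair in a monoidal category $(\mathfrak{C},\otimes,\mathbbm{1})$, and set $\alpha=\phi\circ\eta\colon\mathbbm{1}\to Y\otimes X$ and $\beta=\epsilon\circ\psi\colon X\otimes Y\to\mathbbm{1}$. Then \[ (\beta\otimes X)\circ(X\otimes\alpha)=\mathrm{id}_X \quad\text{and}\quad (Y\otimes\beta)\circ(\alpha\otimes Y)=\mathrm{id}_Y, \] so $X$ is left dualizable with dual $Y$. Consequently, for all objects $U,V$ of $\mathfrak{C}$ there are bijections, natural in $U$ and $V$, \[ \lambda\colon \operatorname{Hom}_{\mathfrak{C}}(X\otimes U,V)\to\operatorname{Hom}_{\mathfrak{C}}(U,Y\otimes V),\quad \lambda(f)=(Y\otimes f)\circ(\phi\eta\otimes U), \] with inverse $g\mapsto(\epsilon\psi\otimes V)\circ(X\otimes g)$, and \[ \rho\colon \operatorname{Hom}_{\mathfrak{C}}(U\otimes Y,V)\to\operatorname{Hom}_{\mathfrak{C}}(U,V\otimes X),\quad \rho(f)=(f\otimes X)\circ(U\otimes\phi\eta), \] with inverse $g\mapsto(V\otimes\epsilon\psi)\circ(g\otimes Y)$.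
   Context: Throughout, $(\mathfrak{C},\otimes,\mathbbm{1})$ is a monoidal category; associativity and unit isomorphisms are suppressed (identifying $\mathbbm{1}\otimes A=A=A\otimes\mathbbm{1}$). A \emph{left Frobenius pair} in $\mathfrak{C}$ consists of objects $X,Y$ and morphisms $\epsilon\colon Y\to\mathbbm{1}$, $\eta\colon\mathbbm{1}\to X$, $\delta\colon Y\to Y\otimes Y$, $\mu\colon X\otimes X\to X$, $\phi\colon X\to Y\otimes X$, $\psi\colon X\otimes Y\to Y$ such that: (1a) $(X,\eta,\mu)$ is an associative unital monoid: $\mu(\mu\otimes X)=\mu(X\otimes\mu)$, $\mu(\eta\otimes X)=\mathrm{id}_X=\mu(X\otimes\eta)$; (1b) $(Y,\epsilon,\delta)$ is a coassociative counital comonoid: $(\delta\otimes Y)\delta=(Y\otimes\delta)\delta$, $(\epsilon\otimes Y)\delta=\mathrm{id}_Y=(Y\otimes\epsilon)\delta$; (2a) $\psi$ is a left $X$-module structure on $Y$: $\psi(\mu\otimes Y)=\psi(X\otimes\psi)$, $\psi(\eta\otimes Y)=\mathrm{id}_Y$; (2b) $\phi$ is a left $Y$-comodule structure on $X$: $(\delta\otimes X)\phi=(Y\otimes\phi)\phi$, $(\epsilon\otimes X)\phi=\mathrm{id}_X$; (3a) $\phi$ is a left $X$-module map: $\phi\circ\mu=(\psi\otimes X)\circ(X\otimes\phi)$; (3b) $\psi$ is a left $Y$-comodule map: $\delta\circ\psi=(Y\otimes\psi)\circ(\phi\otimes Y)$. *)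

theory Defs
  imports Main
begin

text \<open>Associativity and unit isomorphisms are
suppressed in the paper (identifying 1 (x) A = A = A (x) 1 and bracketings),
so we model the monoidal category as a strict one. Every element of the
morphism type is an arrow with a domain and codomain; composition
Comp C g f means g after f and is only constrained when Cod f = Dom g.\<close>

record ('o, 'm) moncat =
  Dom  :: "'m \<Rightarrow> 'o"
  Cod  :: "'m \<Rightarrow> 'o"
  Comp :: "'m \<Rightarrow> 'm \<Rightarrow> 'm"
  Idm  :: "'o \<Rightarrow> 'm"
  TenO :: "'o \<Rightarrow> 'o \<Rightarrow> 'o"
  TenM :: "'m \<Rightarrow> 'm \<Rightarrow> 'm"
  Unit :: "'o"

definition Hom :: "('o, 'm, 'z) moncat_scheme \<Rightarrow> 'o \<Rightarrow> 'o \<Rightarrow> 'm set" where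
  "Hom C A B = {f. Dom C f = A \<and> Cod C f = B}"

definition strict_monoidal_category :: "('o, 'm, 'z) moncat_scheme \<Rightarrow> bool" where
  "strict_monoidal_category C \<longleftrightarrow>
     \<comment> \<open>category axioms\<close>
     (\<forall>A. Dom C (Idm C A) = A \<and> Cod C (Idm C A) = A) \<and>
     (\<forall>f g. Cod C f = Dom C g \<longrightarrow> Dom C (Comp C g f) = Dom C f \<and> Cod C (Comp C g f) = Cod C g) \<and>
     (\<forall>f g h. Cod C f = Dom C g \<and> Cod C g = Dom C h \<longrightarrow>
        Comp C h (Comp C g f) = Comp C (Comp C h g) f) \<and>
     (\<forall>f. Comp C (Idm C (Cod C f)) f = f \<and> Comp C f (Idm C (Dom C f)) = f) \<and>
     \<comment> \<open>tensor is a bifunctor\<close>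
     (\<forall>f g. Dom C (TenM C f g) = TenO C (Dom C f) (Dom C g) \<and>
            Cod C (TenM C f g) = TenO C (Cod C f) (Cod C g)) \<and>
     (\<forall>A B. TenM C (Idm C A) (Idm C B) = Idm C (TenO C A B)) \<and>
     (\<forall>f g f' g'. Cod C f = Dom C g \<and> Cod C f' = Dom C g' \<longrightarrow>
        TenM C (Comp C g f) (Comp C g' f') = Comp C (TenM C g g') (TenM C f f')) \<and>
     \<comment> \<open>strict associativity and unitality\<close>
     (\<forall>A B D. TenO C (TenO C A B) D = TenO C A (TenO C B D)) \<and>
     (\<forall>f g h. TenM C (TenM C f g) h = TenM C f (TenM C g h)) \<and>
     (\<forall>A. TenO C (Unit C) A = A \<and> TenO C A (Unit C) = A) \<and>
     (\<forall>f. TenM C (Idm C (Unit C)) f = f \<and> TenM C f (Idm C (Unit C)) = f)"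

text \<open>Left Frobenius pair (X, Y, eta, mu, psi, epsilon, delta, phi).
Whiskering "f (x) A" means TenM C f (Idm C A).\<close>

definition left_frobenius_pair ::
  "('o, 'm, 'z) moncat_scheme \<Rightarrow> 'o \<Rightarrow> 'o \<Rightarrow> 'm \<Rightarrow> 'm \<Rightarrow> 'm \<Rightarrow> 'm \<Rightarrow> 'm \<Rightarrow> 'm \<Rightarrow> bool" where
  "left_frobenius_pair C X Y \<epsilon> \<eta> \<delta> \<mu> \<phi> \<psi> \<longleftrightarrow>
     \<epsilon> \<in> Hom C Y (Unit C) \<and> \<eta> \<in> Hom C (Unit C) X \<and>
     \<delta> \<in> Hom C Y (TenO C Y Y) \<and> \<mu> \<in> Hom C (TenO C X X) X \<and>
     \<phi> \<in> Hom C X (TenO C Y X) \<and> \<psi> \<in> Hom C (TenO C X Y) Y \<and>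
     \<comment> \<open>(1a)\<close>
     Comp C \<mu> (TenM C \<mu> (Idm C X)) = Comp C \<mu> (TenM C (Idm C X) \<mu>) \<and>
     Comp C \<mu> (TenM C \<eta> (Idm C X)) = Idm C X \<and>
     Comp C \<mu> (TenM C (Idm C X) \<eta>) = Idm C X \<and>
     \<comment> \<open>(1b)\<close>
     Comp C (TenM C \<delta> (Idm C Y)) \<delta> = Comp C (TenM C (Idm C Y) \<delta>) \<delta> \<and>
     Comp C (TenM C \<epsilon> (Idm C Y)) \<delta> = Idm C Y \<and>
     Comp C (TenM C (Idm C Y) \<epsilon>) \<delta> = Idm C Y \<and>
     \<comment> \<open>(2a)\<close>
     Comp C \<psi> (TenM C \<mu> (Idm C Y)) = Comp C \<psi> (TenM C (Idm C X) \<psi>) \<and>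
     Comp C \<psi> (TenM C \<eta> (Idm C Y)) = Idm C Y \<and>
     \<comment> \<open>(2b)\<close>
     Comp C (TenM C \<delta> (Idm C X)) \<phi> = Comp C (TenM C (Idm C Y) \<phi>) \<phi> \<and>
     Comp C (TenM C \<epsilon> (Idm C X)) \<phi> = Idm C X \<and>
     \<comment> \<open>(3a)\<close>
     Comp C \<phi> \<mu> = Comp C (TenM C \<psi> (Idm C X)) (TenM C (Idm C X) \<phi>) \<and>
     \<comment> \<open>(3b)\<close>
     Comp C \<delta> \<psi> = Comp C (TenM C (Idm C Y) \<psi>) (TenM C \<phi> (Idm C Y))"

end

theory Submission
  imports Defs
begin

text \<open>
  Expanding the first zigzag composite, condition (3a) rewrites its middle part
  \<open>(\<psi> \<otimes> X) \<circ> (X \<otimes> \<phi>)\<close> as \<open>\<phi> \<circ> \<mu>\<close>; the unit law of \<open>\<mu>\<close> and the counit law of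
  \<open>\<phi>\<close> then collapse it to the identity, and dually (3b) with the unit law of \<open>\<psi>\<close> and
  the counit law of \<open>\<delta>\<close> gives the second one. So \<open>\<alpha> = \<phi>\<eta>\<close> and \<open>\<beta> = \<epsilon>\<psi>\<close> exhibit \<open>Y\<close>
  as a dual of \<open>X\<close>, and \<open>\<lambda>\<close> and its inverse are the usual mates of a duality: the
  composites reduce to a zigzag identity after sliding morphisms past each other with
  the interchange law. In the reversed monoidal category \<open>(Y, X)\<close> is again a dual
  pair and \<open>\<lambda>\<close> becomes \<open>\<rho>\<close>, so the statements about \<open>\<rho>\<close> come for free.
\<close>

locale strict_monoidal =
  fixes C :: "('o, 'm, 'z) moncat_scheme"
  assumes strict_monoidal_category: "strict_monoidal_category C"
begin

abbreviation comp :: "'m \<Rightarrow> 'm \<Rightarrow> 'm" (infixr "\<cdot>" 55)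
  where "g \<cdot> f \<equiv> Comp C g f"
abbreviation tensor :: "'m \<Rightarrow> 'm \<Rightarrow> 'm" (infixr "\<otimes>" 70)
  where "f \<otimes> g \<equiv> TenM C f g"
abbreviation tensor_obj :: "'o \<Rightarrow> 'o \<Rightarrow> 'o" (infixr "\<odot>" 70)
  where "A \<odot> B \<equiv> TenO C A B"
abbreviation identity :: "'o \<Rightarrow> 'm" ("\<one>\<^bsub>_\<^esub>")
  where "\<one>\<^bsub>A\<^esub> \<equiv> Idm C A"

lemma Dom_Idm [simp]: "Dom C \<one>\<^bsub>A\<^esub> = A"
  and Cod_Idm [simp]: "Cod C \<one>\<^bsub>A\<^esub> = A"
  using strict_monoidal_category unfolding strict_monoidal_category_def by auto

lemma Dom_Comp [simp]: "Cod C f = Dom C g \<Longrightarrow> Dom C (g \<cdot> f) = Dom C f"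
  and Cod_Comp [simp]: "Cod C f = Dom C g \<Longrightarrow> Cod C (g \<cdot> f) = Cod C g"
  using strict_monoidal_category unfolding strict_monoidal_category_def by auto

lemma comp_assoc:
  "Cod C f = Dom C g \<Longrightarrow> Cod C g = Dom C h \<Longrightarrow> h \<cdot> g \<cdot> f = (h \<cdot> g) \<cdot> f"
  using strict_monoidal_category unfolding strict_monoidal_category_def by auto

lemma Idm_comp [simp]: "Cod C f = A \<Longrightarrow> \<one>\<^bsub>A\<^esub> \<cdot> f = f"
  and comp_Idm [simp]: "Dom C f = A \<Longrightarrow> f \<cdot> \<one>\<^bsub>A\<^esub> = f"
  using strict_monoidal_category unfolding strict_monoidal_category_def by auto

lemma Dom_tensor [simp]: "Dom C (f \<otimes> g) = Dom C f \<odot> Dom C g"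
  and Cod_tensor [simp]: "Cod C (f \<otimes> g) = Cod C f \<odot> Cod C g"
  using strict_monoidal_category unfolding strict_monoidal_category_def by auto

lemma tensor_Idm_Idm [simp]: "\<one>\<^bsub>A\<^esub> \<otimes> \<one>\<^bsub>B\<^esub> = \<one>\<^bsub>A \<odot> B\<^esub>"
  using strict_monoidal_category unfolding strict_monoidal_category_def by auto

lemma tensor_comp:
  "Cod C f = Dom C g \<Longrightarrow> Cod C f' = Dom C g' \<Longrightarrow> (g \<cdot> f) \<otimes> (g' \<cdot> f') = (g \<otimes> g') \<cdot> (f \<otimes> f')"
  using strict_monoidal_category unfolding strict_monoidal_category_def by auto

lemma tensor_obj_assoc [simp]: "(A \<odot> B) \<odot> D = A \<odot> B \<odot> D"
  and tensor_assoc [simp]: "(f \<otimes> g) \<otimes> h = f \<otimes> g \<otimes> h"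
  using strict_monoidal_category unfolding strict_monoidal_category_def by auto

lemma tensor_obj_Unit [simp]: "Unit C \<odot> A = A" "A \<odot> Unit C = A"
  and tensor_Idm_Unit [simp]: "\<one>\<^bsub>Unit C\<^esub> \<otimes> f = f" "f \<otimes> \<one>\<^bsub>Unit C\<^esub> = f"
  using strict_monoidal_category unfolding strict_monoidal_category_def by auto

lemma Idm_tensor_obj_tensor [simp]: "\<one>\<^bsub>A \<odot> B\<^esub> \<otimes> f = \<one>\<^bsub>A\<^esub> \<otimes> \<one>\<^bsub>B\<^esub> \<otimes> f"
  by (metis tensor_assoc tensor_Idm_Idm)

lemma whisker_left_comp:
  "Cod C f = Dom C g \<Longrightarrow> \<one>\<^bsub>A\<^esub> \<otimes> (g \<cdot> f) = (\<one>\<^bsub>A\<^esub> \<otimes> g) \<cdot> (\<one>\<^bsub>A\<^esub> \<otimes> f)"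
  using tensor_comp[of "\<one>\<^bsub>A\<^esub>" "\<one>\<^bsub>A\<^esub>" f g] by simp

lemma whisker_right_comp:
  "Cod C f = Dom C g \<Longrightarrow> (g \<cdot> f) \<otimes> \<one>\<^bsub>A\<^esub> = (g \<otimes> \<one>\<^bsub>A\<^esub>) \<cdot> (f \<otimes> \<one>\<^bsub>A\<^esub>)"
  using tensor_comp[of f g "\<one>\<^bsub>A\<^esub>" "\<one>\<^bsub>A\<^esub>"] by simp

lemma interchange:
  "(f \<otimes> \<one>\<^bsub>Cod C g\<^esub>) \<cdot> (\<one>\<^bsub>Dom C f\<^esub> \<otimes> g) = (\<one>\<^bsub>Cod C f\<^esub> \<otimes> g) \<cdot> (f \<otimes> \<one>\<^bsub>Dom C g\<^esub>)"
  using tensor_comp[of "\<one>\<^bsub>Dom C f\<^esub>" f g "\<one>\<^bsub>Cod C g\<^esub>"]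
    tensor_comp[of f "\<one>\<^bsub>Cod C f\<^esub>" "\<one>\<^bsub>Dom C g\<^esub>" g]
  by simp

end

definition reverse_moncat :: "('o, 'm, 'z) moncat_scheme \<Rightarrow> ('o, 'm, 'z) moncat_scheme"
  where "reverse_moncat C = C\<lparr>TenO := \<lambda>A B. TenO C B A, TenM := \<lambda>f g. TenM C g f\<rparr>"

lemma reverse_moncat_simps [simp]:
  "Dom (reverse_moncat C) = Dom C" "Cod (reverse_moncat C) = Cod C"
  "Comp (reverse_moncat C) = Comp C" "Idm (reverse_moncat C) = Idm C"
  "Unit (reverse_moncat C) = Unit C"
  "TenO (reverse_moncat C) A B = TenO C B A" "TenM (reverse_moncat C) f g = TenM C g f"
  by (simp_all add: reverse_moncat_def)

lemma Hom_reverse_moncat [simp]: "Hom (reverse_moncat C) = Hom C"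
  by (simp add: Hom_def fun_eq_iff)

lemma strict_monoidal_category_reverse_moncat:
  "strict_monoidal_category C \<Longrightarrow> strict_monoidal_category (reverse_moncat C)"
  unfolding strict_monoidal_category_def by simp

locale dual_pair = strict_monoidal C for C :: "('o, 'm, 'z) moncat_scheme" +
  fixes X Y :: 'o and \<alpha> \<beta> :: 'm
  assumes coev_in_Hom: "\<alpha> \<in> Hom C (Unit C) (Y \<odot> X)"
    and ev_in_Hom: "\<beta> \<in> Hom C (X \<odot> Y) (Unit C)"
    and zigzag_X: "(\<beta> \<otimes> \<one>\<^bsub>X\<^esub>) \<cdot> (\<one>\<^bsub>X\<^esub> \<otimes> \<alpha>) = \<one>\<^bsub>X\<^esub>"
    and zigzag_Y: "(\<one>\<^bsub>Y\<^esub> \<otimes> \<beta>) \<cdot> (\<alpha> \<otimes> \<one>\<^bsub>Y\<^esub>) = \<one>\<^bsub>Y\<^esub>"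
begin

lemma Dom_coev [simp]: "Dom C \<alpha> = Unit C"
  and Cod_coev [simp]: "Cod C \<alpha> = Y \<odot> X"
  and Dom_ev [simp]: "Dom C \<beta> = X \<odot> Y"
  and Cod_ev [simp]: "Cod C \<beta> = Unit C"
  using coev_in_Hom ev_in_Hom by (simp_all add: Hom_def)

definition lam :: "'o \<Rightarrow> 'm \<Rightarrow> 'm"
  where "lam U f = (\<one>\<^bsub>Y\<^esub> \<otimes> f) \<cdot> (\<alpha> \<otimes> \<one>\<^bsub>U\<^esub>)"

definition lam_inv :: "'o \<Rightarrow> 'm \<Rightarrow> 'm"
  where "lam_inv V g = (\<beta> \<otimes> \<one>\<^bsub>V\<^esub>) \<cdot> (\<one>\<^bsub>X\<^esub> \<otimes> g)"

lemma lam_in_Hom: "f \<in> Hom C (X \<odot> U) V \<Longrightarrow> lam U f \<in> Hom C U (Y \<odot> V)"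
  by (simp add: Hom_def lam_def)

lemma lam_inv_in_Hom: "g \<in> Hom C U (Y \<odot> V) \<Longrightarrow> lam_inv V g \<in> Hom C (X \<odot> U) V"
  by (simp add: Hom_def lam_inv_def)

lemma lam_inv_lam:
  assumes f: "f \<in> Hom C (X \<odot> U) V"
  shows "lam_inv V (lam U f) = f"
proof -
  have [simp]: "Dom C f = X \<odot> U" "Cod C f = V"
    using f by (simp_all add: Hom_def)
  have "lam_inv V (lam U f) = ((\<beta> \<otimes> \<one>\<^bsub>V\<^esub>) \<cdot> (\<one>\<^bsub>X\<^esub> \<otimes> \<one>\<^bsub>Y\<^esub> \<otimes> f)) \<cdot> (\<one>\<^bsub>X\<^esub> \<otimes> \<alpha> \<otimes> \<one>\<^bsub>U\<^esub>)"
    using whisker_left_comp[of "\<alpha> \<otimes> \<one>\<^bsub>U\<^esub>" "\<one>\<^bsub>Y\<^esub> \<otimes> f" X]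
    by (simp add: lam_def lam_inv_def comp_assoc)
  also have "\<dots> = f \<cdot> (\<beta> \<otimes> \<one>\<^bsub>X\<^esub> \<otimes> \<one>\<^bsub>U\<^esub>) \<cdot> (\<one>\<^bsub>X\<^esub> \<otimes> \<alpha> \<otimes> \<one>\<^bsub>U\<^esub>)"
    using interchange[of \<beta> f] by (simp add: comp_assoc)
  also have "\<dots> = f \<cdot> (((\<beta> \<otimes> \<one>\<^bsub>X\<^esub>) \<cdot> (\<one>\<^bsub>X\<^esub> \<otimes> \<alpha>)) \<otimes> \<one>\<^bsub>U\<^esub>)"
    using whisker_right_comp[of "\<one>\<^bsub>X\<^esub> \<otimes> \<alpha>" "\<beta> \<otimes> \<one>\<^bsub>X\<^esub>" U] by simp
  also have "\<dots> = f"
    by (simp add: zigzag_X)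
  finally show ?thesis .
qed


lemma lam_lam_inv:
  assumes g: "g \<in> Hom C U (Y \<odot> V)"
  shows "lam U (lam_inv V g) = g"
proof -
  have [simp]: "Dom C g = U" "Cod C g = Y \<odot> V"
    using g by (simp_all add: Hom_def)
  have "lam U (lam_inv V g) = (\<one>\<^bsub>Y\<^esub> \<otimes> \<beta> \<otimes> \<one>\<^bsub>V\<^esub>) \<cdot> (\<one>\<^bsub>Y\<^esub> \<otimes> \<one>\<^bsub>X\<^esub> \<otimes> g) \<cdot> (\<alpha> \<otimes> \<one>\<^bsub>U\<^esub>)"
    using whisker_left_comp[of "\<one>\<^bsub>X\<^esub> \<otimes> g" "\<beta> \<otimes> \<one>\<^bsub>V\<^esub>" Y]
    by (simp add: lam_def lam_inv_def comp_assoc)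
  also have "\<dots> = (\<one>\<^bsub>Y\<^esub> \<otimes> \<beta> \<otimes> \<one>\<^bsub>V\<^esub>) \<cdot> (\<alpha> \<otimes> \<one>\<^bsub>Y\<^esub> \<otimes> \<one>\<^bsub>V\<^esub>) \<cdot> g"
    using interchange[of \<alpha> g] by simp
  also have "\<dots> = (((\<one>\<^bsub>Y\<^esub> \<otimes> \<beta>) \<cdot> (\<alpha> \<otimes> \<one>\<^bsub>Y\<^esub>)) \<otimes> \<one>\<^bsub>V\<^esub>) \<cdot> g"
    using whisker_right_comp[of "\<alpha> \<otimes> \<one>\<^bsub>Y\<^esub>" "\<one>\<^bsub>Y\<^esub> \<otimes> \<beta>" V] by (simp add: comp_assoc)
  also have "\<dots> = g"
    by (simp add: zigzag_Y)
  finally show ?thesis .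
qed

lemma bij_betw_lam: "bij_betw (lam U) (Hom C (X \<odot> U) V) (Hom C U (Y \<odot> V))"
  by (rule bij_betw_byWitness[where f' = "lam_inv V"])
    (auto simp: lam_inv_lam lam_lam_inv lam_in_Hom lam_inv_in_Hom)

lemma lam_natural:
  assumes u: "u \<in> Hom C U' U" and v: "v \<in> Hom C V V'" and f: "f \<in> Hom C (X \<odot> U) V"
  shows "lam U' (v \<cdot> f \<cdot> (\<one>\<^bsub>X\<^esub> \<otimes> u)) = (\<one>\<^bsub>Y\<^esub> \<otimes> v) \<cdot> lam U f \<cdot> u"
proof -
  have [simp]: "Dom C u = U'" "Cod C u = U" "Dom C v = V" "Dom C f = X \<odot> U" "Cod C f = V"
    using u v f by (simp_all add: Hom_def)
  have "lam U' (v \<cdot> f \<cdot> (\<one>\<^bsub>X\<^esub> \<otimes> u)) = (\<one>\<^bsub>Y\<^esub> \<otimes> v) \<cdot> (\<one>\<^bsub>Y\<^esub> \<otimes> f) \<cdot> (\<one>\<^bsub>Y\<^esub> \<otimes> \<one>\<^bsub>X\<^esub> \<otimes> u) \<cdot> (\<alpha> \<otimes> \<one>\<^bsub>U'\<^esub>)"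
    using whisker_left_comp[of "f \<cdot> (\<one>\<^bsub>X\<^esub> \<otimes> u)" v Y] whisker_left_comp[of "\<one>\<^bsub>X\<^esub> \<otimes> u" f Y]
    by (simp add: lam_def comp_assoc)
  also have "\<dots> = (\<one>\<^bsub>Y\<^esub> \<otimes> v) \<cdot> (\<one>\<^bsub>Y\<^esub> \<otimes> f) \<cdot> (\<alpha> \<otimes> \<one>\<^bsub>U\<^esub>) \<cdot> u"
    using interchange[of \<alpha> u] by (simp add: comp_assoc)
  also have "\<dots> = (\<one>\<^bsub>Y\<^esub> \<otimes> v) \<cdot> lam U f \<cdot> u"
    by (simp add: lam_def comp_assoc)
  finally show ?thesis .
qed


lemma dual_pair_reverse_moncat: "dual_pair (reverse_moncat C) Y X \<alpha> \<beta>"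
  by (rule dual_pair.intro, simp add: strict_monoidal_def strict_monoidal_category_reverse_moncat
      strict_monoidal_category)
    (simp add: dual_pair_axioms_def coev_in_Hom ev_in_Hom zigzag_X zigzag_Y)

definition rho :: "'o \<Rightarrow> 'm \<Rightarrow> 'm"
  where "rho U f = (f \<otimes> \<one>\<^bsub>X\<^esub>) \<cdot> (\<one>\<^bsub>U\<^esub> \<otimes> \<alpha>)"

definition rho_inv :: "'o \<Rightarrow> 'm \<Rightarrow> 'm"
  where "rho_inv V g = (\<one>\<^bsub>V\<^esub> \<otimes> \<beta>) \<cdot> (g \<otimes> \<one>\<^bsub>Y\<^esub>)"

lemma lam_reverse_moncat [simp]: "dual_pair.lam (reverse_moncat C) X \<alpha> U = rho U"
  by (simp add: fun_eq_iff dual_pair.lam_def[OF dual_pair_reverse_moncat] rho_def)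

lemma lam_inv_reverse_moncat [simp]: "dual_pair.lam_inv (reverse_moncat C) Y \<beta> V = rho_inv V"
  by (simp add: fun_eq_iff dual_pair.lam_inv_def[OF dual_pair_reverse_moncat] rho_inv_def)

lemma rho_inv_rho: "f \<in> Hom C (U \<odot> Y) V \<Longrightarrow> rho_inv V (rho U f) = f"
  using dual_pair.lam_inv_lam[OF dual_pair_reverse_moncat, of f U V] by simp

lemma rho_rho_inv: "g \<in> Hom C U (V \<odot> X) \<Longrightarrow> rho U (rho_inv V g) = g"
  using dual_pair.lam_lam_inv[OF dual_pair_reverse_moncat, of g U V] by simp

lemma rho_inv_in_Hom: "g \<in> Hom C U (V \<odot> X) \<Longrightarrow> rho_inv V g \<in> Hom C (U \<odot> Y) V"
  using dual_pair.lam_inv_in_Hom[OF dual_pair_reverse_moncat, of g U V] by simp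

lemma bij_betw_rho: "bij_betw (rho U) (Hom C (U \<odot> Y) V) (Hom C U (V \<odot> X))"
  using dual_pair.bij_betw_lam[OF dual_pair_reverse_moncat, of U V] by simp

lemma rho_natural:
  "u \<in> Hom C U' U \<Longrightarrow> v \<in> Hom C V V' \<Longrightarrow> f \<in> Hom C (U \<odot> Y) V \<Longrightarrow>
    rho U' (v \<cdot> f \<cdot> (u \<otimes> \<one>\<^bsub>Y\<^esub>)) = (v \<otimes> \<one>\<^bsub>X\<^esub>) \<cdot> rho U f \<cdot> u"
  using dual_pair.lam_natural[OF dual_pair_reverse_moncat, of u U' U v V V' f] by simp

end

context strict_monoidal
begin

lemma dual_pair_left_frobenius_pair:
  assumes "left_frobenius_pair C X Y \<epsilon> \<eta> \<delta> \<mu> \<phi> \<psi>"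
  shows "dual_pair C X Y (\<phi> \<cdot> \<eta>) (\<epsilon> \<cdot> \<psi>)"
proof -
  have [simp]: "Dom C \<epsilon> = Y" "Cod C \<epsilon> = Unit C" "Dom C \<eta> = Unit C" "Cod C \<eta> = X"
    "Dom C \<delta> = Y" "Cod C \<delta> = Y \<odot> Y" "Dom C \<mu> = X \<odot> X" "Cod C \<mu> = X"
    "Dom C \<phi> = X" "Cod C \<phi> = Y \<odot> X" "Dom C \<psi> = X \<odot> Y" "Cod C \<psi> = Y"
    and unit: "\<mu> \<cdot> (\<one>\<^bsub>X\<^esub> \<otimes> \<eta>) = \<one>\<^bsub>X\<^esub>" "\<psi> \<cdot> (\<eta> \<otimes> \<one>\<^bsub>Y\<^esub>) = \<one>\<^bsub>Y\<^esub>"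
    and counit: "(\<epsilon> \<otimes> \<one>\<^bsub>X\<^esub>) \<cdot> \<phi> = \<one>\<^bsub>X\<^esub>" "(\<one>\<^bsub>Y\<^esub> \<otimes> \<epsilon>) \<cdot> \<delta> = \<one>\<^bsub>Y\<^esub>"
    and frobenius: "\<phi> \<cdot> \<mu> = (\<psi> \<otimes> \<one>\<^bsub>X\<^esub>) \<cdot> (\<one>\<^bsub>X\<^esub> \<otimes> \<phi>)"
      "\<delta> \<cdot> \<psi> = (\<one>\<^bsub>Y\<^esub> \<otimes> \<psi>) \<cdot> (\<phi> \<otimes> \<one>\<^bsub>Y\<^esub>)"
    using assms by (simp_all add: left_frobenius_pair_def Hom_def)
  have "((\<epsilon> \<cdot> \<psi>) \<otimes> \<one>\<^bsub>X\<^esub>) \<cdot> (\<one>\<^bsub>X\<^esub> \<otimes> (\<phi> \<cdot> \<eta>))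
      = (\<epsilon> \<otimes> \<one>\<^bsub>X\<^esub>) \<cdot> ((\<psi> \<otimes> \<one>\<^bsub>X\<^esub>) \<cdot> (\<one>\<^bsub>X\<^esub> \<otimes> \<phi>)) \<cdot> (\<one>\<^bsub>X\<^esub> \<otimes> \<eta>)"
    using whisker_left_comp[of \<eta> \<phi> X] whisker_right_comp[of \<psi> \<epsilon> X] by (simp add: comp_assoc)
  also have "\<dots> = (\<epsilon> \<otimes> \<one>\<^bsub>X\<^esub>) \<cdot> (\<phi> \<cdot> \<mu>) \<cdot> (\<one>\<^bsub>X\<^esub> \<otimes> \<eta>)"
    by (simp only: frobenius)
  also have "\<dots> = ((\<epsilon> \<otimes> \<one>\<^bsub>X\<^esub>) \<cdot> \<phi>) \<cdot> \<mu> \<cdot> (\<one>\<^bsub>X\<^esub> \<otimes> \<eta>)"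
    by (simp add: comp_assoc)
  also have "\<dots> = \<one>\<^bsub>X\<^esub>"
    by (simp add: unit counit)
  finally have zigzag_X: "((\<epsilon> \<cdot> \<psi>) \<otimes> \<one>\<^bsub>X\<^esub>) \<cdot> (\<one>\<^bsub>X\<^esub> \<otimes> (\<phi> \<cdot> \<eta>)) = \<one>\<^bsub>X\<^esub>" .
  have "(\<one>\<^bsub>Y\<^esub> \<otimes> (\<epsilon> \<cdot> \<psi>)) \<cdot> ((\<phi> \<cdot> \<eta>) \<otimes> \<one>\<^bsub>Y\<^esub>)
      = (\<one>\<^bsub>Y\<^esub> \<otimes> \<epsilon>) \<cdot> ((\<one>\<^bsub>Y\<^esub> \<otimes> \<psi>) \<cdot> (\<phi> \<otimes> \<one>\<^bsub>Y\<^esub>)) \<cdot> (\<eta> \<otimes> \<one>\<^bsub>Y\<^esub>)"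
    using whisker_right_comp[of \<eta> \<phi> Y] whisker_left_comp[of \<psi> \<epsilon> Y] by (simp add: comp_assoc)
  also have "\<dots> = (\<one>\<^bsub>Y\<^esub> \<otimes> \<epsilon>) \<cdot> (\<delta> \<cdot> \<psi>) \<cdot> (\<eta> \<otimes> \<one>\<^bsub>Y\<^esub>)"
    by (simp only: frobenius)
  also have "\<dots> = ((\<one>\<^bsub>Y\<^esub> \<otimes> \<epsilon>) \<cdot> \<delta>) \<cdot> \<psi> \<cdot> (\<eta> \<otimes> \<one>\<^bsub>Y\<^esub>)"
    by (simp add: comp_assoc)
  also have "\<dots> = \<one>\<^bsub>Y\<^esub>"
    by (simp add: unit counit)
  finally have zigzag_Y: "(\<one>\<^bsub>Y\<^esub> \<otimes> (\<epsilon> \<cdot> \<psi>)) \<cdot> ((\<phi> \<cdot> \<eta>) \<otimes> \<one>\<^bsub>Y\<^esub>) = \<one>\<^bsub>Y\<^esub>" .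
  show ?thesis
    by unfold_locales (simp_all add: Hom_def zigzag_X zigzag_Y)
qed

end

theorem mainTheorem2:
  fixes C :: "('o, 'm, 'z) moncat_scheme"
    and X Y :: 'o and \<epsilon> \<eta> \<delta> \<mu> \<phi> \<psi> :: 'm
  assumes "strict_monoidal_category C"
    and "left_frobenius_pair C X Y \<epsilon> \<eta> \<delta> \<mu> \<phi> \<psi>"
  defines "\<alpha> \<equiv> Comp C \<phi> \<eta>"
    and "\<beta> \<equiv> Comp C \<epsilon> \<psi>"
    and "lam \<equiv> \<lambda>U f. Comp C (TenM C (Idm C Y) f) (TenM C (Comp C \<phi> \<eta>) (Idm C U))"
    and "lam_inv \<equiv> \<lambda>V g. Comp C (TenM C (Comp C \<epsilon> \<psi>) (Idm C V)) (TenM C (Idm C X) g)"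
    and "rho \<equiv> \<lambda>U f. Comp C (TenM C f (Idm C X)) (TenM C (Idm C U) (Comp C \<phi> \<eta>))"
    and "rho_inv \<equiv> \<lambda>V g. Comp C (TenM C (Idm C V) (Comp C \<epsilon> \<psi>)) (TenM C g (Idm C Y))"
  shows
    "Comp C (TenM C \<beta> (Idm C X)) (TenM C (Idm C X) \<alpha>) = Idm C X
     \<and> Comp C (TenM C (Idm C Y) \<beta>) (TenM C \<alpha> (Idm C Y)) = Idm C Y
     \<and> (\<forall>U V.
          bij_betw (lam U) (Hom C (TenO C X U) V) (Hom C U (TenO C Y V))
        \<and> (\<forall>f \<in> Hom C (TenO C X U) V. lam_inv V (lam U f) = f)
        \<and> (\<forall>g \<in> Hom C U (TenO C Y V). lam_inv V g \<in> Hom C (TenO C X U) V \<and> lam U (lam_inv V g) = g)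
        \<and> bij_betw (rho U) (Hom C (TenO C U Y) V) (Hom C U (TenO C V X))
        \<and> (\<forall>f \<in> Hom C (TenO C U Y) V. rho_inv V (rho U f) = f)
        \<and> (\<forall>g \<in> Hom C U (TenO C V X). rho_inv V g \<in> Hom C (TenO C U Y) V \<and> rho U (rho_inv V g) = g))
     \<and> (\<forall>U U' V V' u v f.
          u \<in> Hom C U' U \<longrightarrow> v \<in> Hom C V V' \<longrightarrow> f \<in> Hom C (TenO C X U) V \<longrightarrow>
          lam U' (Comp C v (Comp C f (TenM C (Idm C X) u)))
            = Comp C (TenM C (Idm C Y) v) (Comp C (lam U f) u))
     \<and> (\<forall>U U' V V' u v f.
          u \<in> Hom C U' U \<longrightarrow> v \<in> Hom C V V' \<longrightarrow> f \<in> Hom C (TenO C U Y) V \<longrightarrow>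
          rho U' (Comp C v (Comp C f (TenM C u (Idm C Y))))
            = Comp C (TenM C v (Idm C X)) (Comp C (rho U f) u))"
proof -
  interpret strict_monoidal C
    by (rule strict_monoidal.intro) (fact assms(1))
  interpret D: dual_pair C X Y \<alpha> \<beta>
    unfolding \<alpha>_def \<beta>_def by (rule dual_pair_left_frobenius_pair) (fact assms(2))
  have "lam = D.lam" "lam_inv = D.lam_inv" "rho = D.rho" "rho_inv = D.rho_inv"
    unfolding lam_def lam_inv_def rho_def rho_inv_def \<alpha>_def[symmetric] \<beta>_def[symmetric]
    by (simp_all add: fun_eq_iff D.lam_def D.lam_inv_def D.rho_def D.rho_inv_def)
  then show ?thesis
    using D.zigzag_X D.zigzag_Y D.bij_betw_lam D.lam_inv_lam D.lam_inv_in_Hom D.lam_lam_inv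
      D.bij_betw_rho D.rho_inv_rho D.rho_inv_in_Hom D.rho_rho_inv D.lam_natural D.rho_natural
    by simp
qed

end
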